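(* Let $A=\{i_1,\dots,i_a\}\subseteq\{1,\dots,d\}$ be an ordered subset, let $\alpha\in\mathbb{Z}_2^a$ be even (i.e. $\alpha_1+\dots+\alpha_a$ is even), and let $r\geq 0$. Then the X-cycle $$A^{(r,\alpha)} := h_r^\alpha(A)\,\sigma_A\,c_\alpha(A)$$ lies in $\mathcal{C}_X=\operatorname{Cent}_{\operatorname{gr}\mathcal{S}^f_d}(x_1,\dots,x_d)$, i.e. it commutes with every polynomial generator $x_1,\dots,x_d$ of $\operatorname{gr}\mathcal{S}^f_d$.
   Context: Fix $l,d\geq 1$ and a commutative ring $R$. $\operatorname{gr}\mathcal{S}^f_d$ is the associated graded superalgebra of the cyclotomic Sergeev superalgebra $\mathcal{S}^f_d$ (the quotient of the affine Sergeev superalgebra by the two-sided ideal generated by $f(\hat x_1)$, $f$ monic of degree $l$ with terms all of the same parity), filtered by putting polynomial generators in degree $1$ and Coxeter and Clifford generators in degree $0$. By the PBW theorem, $\operatorname{gr}\mathcal{S}^f_d\cong (R[x_1,\dots,x_d]/(x_1^l,\dots,x_d^l)\,\hat\otimes\, R\Sigma_d)\otimes C_d$, where $C_d$ is the Clifford superalgebra on odd generators $c_1,\dots,c_d$ with $c_i^2=1$, $c_ic_j=-c_jc_i$ ($i\neq j$); in it $x_ic_i=-c_ix_i$, $x_ic_j=c_jx_i$ ($i\ne j$), and permutations act on the indices of $x$'s and $c$'s by conjugation. For $A=\{i_1,\dots,i_a\}$, $\sigma_A$ is the cycle $(i_1\ \dots\ i_a)\in\Sigma_d$, and $c_\alpha(A)=c_{i_1}^{\alpha_1}\cdots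 c_{i_a}^{\alpha_a}$. For $\alpha\in\mathbb{Z}_2^a$ define signs $\epsilon^\alpha_i=\prod_{j<i}(-1)^{\alpha_j}$ ($\epsilon^\alpha_1=1$), and for even $\alpha$ and $r\ge 0$ define $$h_r^\alpha(A)=\sum_{r_1+\dots+r_a=(a-1)(l-1)+r}(\epsilon^\alpha_1x_{i_1})^{r_1}\cdots(\epsilon^\alpha_a x_{i_a})^{r_a}.$$ The proof uses the identity $x_{i_j}h^\alpha_r(A)=(-1)^{\alpha_j}h^\alpha_r(A)x_{\sigma_A(i_j)}$ for $j=1,\dots,a$. *)

theory Defs
  imports "HOL-Combinatorics.Permutations"
begin

text \<open>The associated graded superalgebra gr S^f_d is presented (PBW theorem) by even generators
x_1..x_d, the group Sigma_d, and odd Clifford generators c_1..c_d subject to the relations below.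
We state the theorem for every ring (over any coefficient ring, integers acting centrally)
containing elements satisfying these defining relations; this covers gr S^f_d itself.\<close>

definition gr_sergeev_rel ::
  "nat \<Rightarrow> nat \<Rightarrow> (nat \<Rightarrow> 'a::ring_1) \<Rightarrow> ((nat \<Rightarrow> nat) \<Rightarrow> 'a) \<Rightarrow> (nat \<Rightarrow> 'a) \<Rightarrow> bool" where
  "gr_sergeev_rel l d x s c \<longleftrightarrow>
     (\<forall>i\<in>{1..d}. \<forall>j\<in>{1..d}. x i * x j = x j * x i) \<and>
     (\<forall>i\<in>{1..d}. x i ^ l = 0) \<and>
     s id = 1 \<and>
     (\<forall>p q. p permutes {1..d} \<longrightarrow> q permutes {1..d} \<longrightarrow> s (p \<circ> q) = s p * s q) \<and>
     (\<forall>p. p permutes {1..d} \<longrightarrow> (\<forall>i\<in>{1..d}. s p * x i = x (p i) * s p)) \<and>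
     (\<forall>p. p permutes {1..d} \<longrightarrow> (\<forall>i\<in>{1..d}. s p * c i = c (p i) * s p)) \<and>
     (\<forall>i\<in>{1..d}. c i * c i = 1) \<and>
     (\<forall>i\<in>{1..d}. \<forall>j\<in>{1..d}. i \<noteq> j \<longrightarrow> c i * c j = - (c j * c i)) \<and>
     (\<forall>i\<in>{1..d}. x i * c i = - (c i * x i)) \<and>
     (\<forall>i\<in>{1..d}. \<forall>j\<in>{1..d}. i \<noteq> j \<longrightarrow> x i * c j = c j * x i)"

definition list_cycle :: "nat list \<Rightarrow> nat \<Rightarrow> nat" where
  "list_cycle A k = (if k \<in> set A
     then A ! (((THE j. j < length A \<and> A ! j = k) + 1) mod length A) else k)"

definition c_alpha :: "(nat \<Rightarrow> 'a::ring_1) \<Rightarrow> bool list \<Rightarrow> nat list \<Rightarrow> 'a" where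
  "c_alpha c \<alpha> A = prod_list (map (\<lambda>j. if \<alpha> ! j then c (A ! j) else 1) [0..<length A])"

text \<open>epsilon^alpha_i = prod_{j<i} (-1)^{alpha_j}, with 0-based index i.\<close>
definition eps_sign :: "bool list \<Rightarrow> nat \<Rightarrow> int" where
  "eps_sign \<alpha> i = (\<Prod>j<i. if \<alpha> ! j then -1 else 1)"

definition alpha_even :: "bool list \<Rightarrow> bool" where
  "alpha_even \<alpha> \<longleftrightarrow> even (length (filter id \<alpha>))"

definition h_alpha :: "nat \<Rightarrow> (nat \<Rightarrow> 'a::ring_1) \<Rightarrow> nat \<Rightarrow> bool list \<Rightarrow> nat list \<Rightarrow> 'a" where
  "h_alpha l x r \<alpha> A =
     (\<Sum>rs\<in>{rs. length rs = length A \<and> sum_list rs = (length A - 1) * (l - 1) + r}.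
        prod_list (map (\<lambda>j. (of_int (eps_sign \<alpha> j) * x (A ! j)) ^ (rs ! j)) [0..<length A]))"

definition X_cycle :: "nat \<Rightarrow> (nat \<Rightarrow> 'a::ring_1) \<Rightarrow> ((nat \<Rightarrow> nat) \<Rightarrow> 'a) \<Rightarrow> (nat \<Rightarrow> 'a)
    \<Rightarrow> nat \<Rightarrow> bool list \<Rightarrow> nat list \<Rightarrow> 'a" where
  "X_cycle l x s c r \<alpha> A = h_alpha l x r \<alpha> A * s (list_cycle A) * c_alpha c \<alpha> A"

end

theory Submission
  imports Defs
begin

(* Write the X-cycle as h * sigma_A * c_alpha(A) and move x_j across the three factors. If j is
   not in A, everything commutes. If j = i_k, then c_alpha(A) contributes the sign (-1)^alpha_k,
   sigma_A turns x_(sigma_A i_k) into x_(i_k), and h = h_r^alpha(A) turns x_(i_k) into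
   (-1)^alpha_k x_(sigma_A i_k), so the two signs cancel.
   The last step holds because h is the complete homogeneous sum of degree above (a-1)(l-1) in the
   commuting variables eps_k x_(i_k), whose l-th powers vanish: a monomial of one degree higher that
   misses some variable has an exponent >= l, so all the variables act alike on h. Passing from
   eps_k to eps_(k+1) costs (-1)^alpha_k, also across the wrap-around from i_a to i_1 since alpha
   is even. *)

lemma prod_list_commute:
  fixes z :: "'a::monoid_mult"
  assumes "\<And>u. u \<in> set us \<Longrightarrow> z * u = u * z"
  shows "z * prod_list us = prod_list us * z"
  using assms by (induction us) (simp_all, metis mult.assoc)

lemma prod_list_eq_0: "(0::'a::semiring_1) \<in> set xs \<Longrightarrow> prod_list xs = 0"
  by (induction xs) auto

lemma prod_list_map_mult_one_factor:
  fixes z :: "'a::monoid_mult"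
  assumes "distinct xs" "k \<in> set xs" "g k = z * f k"
    and "\<And>j. j \<in> set xs \<Longrightarrow> j \<noteq> k \<Longrightarrow> g j = f j"
    and "\<And>j. j \<in> set xs \<Longrightarrow> z * f j = f j * z"
  shows "z * prod_list (map f xs) = prod_list (map g xs)"
  using assms
proof (induction xs)
  case Nil
  then show ?case by simp
next
  case (Cons j ys)
  show ?case
  proof (cases "j = k")
    case True
    with Cons.prems have "map g ys = map f ys"
      by (intro map_cong) auto
    with True Cons.prems(3) show ?thesis
      by (simp only: list.map prod_list.Cons mult.assoc)
  next
    case False
    with Cons have IH: "z * prod_list (map f ys) = prod_list (map g ys)"
      by auto
    have "z * (f j * prod_list (map f ys)) = f j * (z * prod_list (map f ys))"
      using Cons.prems(5)[of j] by (simp flip: mult.assoc)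
    with False Cons.prems(4) IH show ?thesis
      by simp
  qed
qed

lemma prod_list_map_skew_commute:
  fixes z :: "'a::monoid_mult"
  assumes "distinct xs" "k \<in> set xs" "\<And>u. e * u = u * e" "z * f k = e * f k * z"
    and "\<And>j. j \<in> set xs \<Longrightarrow> j \<noteq> k \<Longrightarrow> z * f j = f j * z"
  shows "z * prod_list (map f xs) = e * prod_list (map f xs) * z"
  using assms
proof (induction xs)
  case Nil
  then show ?case by simp
next
  case (Cons j ys)
  show ?case
  proof (cases "j = k")
    case True
    with Cons.prems have "z * prod_list (map f ys) = prod_list (map f ys) * z"
      by (intro prod_list_commute) auto
    then have "z * (f k * prod_list (map f ys)) = e * f k * prod_list (map f ys) * z"
      using Cons.prems(4) by (simp flip: mult.assoc) (simp add: mult.assoc)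
    with True show ?thesis
      by (simp add: mult.assoc)
  next
    case False
    with Cons have IH: "z * prod_list (map f ys) = e * prod_list (map f ys) * z"
      by auto
    have "z * (f j * prod_list (map f ys)) = f j * e * prod_list (map f ys) * z"
      using Cons.prems(5)[of j] False IH by (simp flip: mult.assoc) (simp add: mult.assoc)
    with Cons.prems(3)[of "f j"] show ?thesis
      by (simp flip: mult.assoc)
  qed
qed

lemma central_involution_cancel:
  fixes e :: "'a::monoid_mult"
  assumes "\<And>u. e * u = u * e" "e * e = 1"
  shows "e * a * (e * b) = a * b"
  by (metis assms mult.assoc mult_1)

lemma of_int_mult_mult_of_int:
  fixes a b :: "'a::ring_1"
  shows "(of_int e * a) * (of_int e' * b) = of_int (e * e') * (a * b)"
proof -
  have "(of_int e * a) * (of_int e' * b) = of_int e * (a * of_int e') * b"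
    by (simp only: mult.assoc)
  also have "\<dots> = of_int (e * e') * (a * b)"
    by (simp only: mult_of_int_commute[of e' a, symmetric] of_int_mult mult.assoc)
  finally show ?thesis .
qed

lemma power_mult_commuting:
  fixes a b :: "'a::monoid_mult"
  assumes "a * b = b * a"
  shows "(a * b) ^ n = a ^ n * b ^ n"
proof (induction n)
  case 0
  then show ?case by simp
next
  case (Suc n)
  have "(a * b) ^ Suc n = a * (b * a ^ n) * b ^ n"
    using Suc by (simp add: mult.assoc)
  also have "\<dots> = a * (a ^ n * b) * b ^ n"
    using power_commuting_commutes[OF assms, of n] by simp
  also have "\<dots> = a ^ Suc n * b ^ Suc n"
    by (simp add: mult.assoc)
  finally show ?case .
qed

section \<open>Complete homogeneous sums in commuting nilpotent variables\<close>

definition weak_compositions :: "nat \<Rightarrow> nat \<Rightarrow> nat list set" where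
  "weak_compositions a n = {t. length t = a \<and> sum_list t = n}"

definition monomial :: "(nat \<Rightarrow> 'a::monoid_mult) \<Rightarrow> nat list \<Rightarrow> 'a" where
  "monomial y t = prod_list (map (\<lambda>j. y j ^ (t!j)) [0..<length t])"

definition complete_homogeneous :: "(nat \<Rightarrow> 'a::semiring_1) \<Rightarrow> nat \<Rightarrow> nat \<Rightarrow> 'a" where
  "complete_homogeneous y a n = sum (monomial y) (weak_compositions a n)"

lemma finite_weak_compositions: "finite (weak_compositions a n)"
proof (rule finite_subset)
  show "weak_compositions a n \<subseteq> {t. set t \<subseteq> {0..n} \<and> length t = a}"
    using member_le_sum_list by (fastforce simp: weak_compositions_def)
qed (rule finite_lists_length_eq, simp)

lemma bij_betw_bump_weak_compositions:
  assumes "k < a"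
  shows "bij_betw (\<lambda>t. t[k := Suc (t!k)])
           (weak_compositions a n) {t \<in> weak_compositions a (Suc n). 0 < t!k}"
proof (rule bij_betw_byWitness[where f' = "\<lambda>t. t[k := t!k - 1]"])
  have bump_sum: "sum_list (t[k := Suc (t!k)]) = Suc (sum_list t)"
    if "k < length t" for t :: "nat list"
    using sum_list_update[OF that] that by simp
  show "(\<lambda>t. t[k := Suc (t!k)]) ` weak_compositions a n
      \<subseteq> {t \<in> weak_compositions a (Suc n). 0 < t!k}"
    using assms bump_sum by (auto simp: weak_compositions_def)
  show "(\<lambda>t. t[k := t!k - 1]) ` {t \<in> weak_compositions a (Suc n). 0 < t!k}
      \<subseteq> weak_compositions a n"
  proof clarify
    fix t assume t: "t \<in> weak_compositions a (Suc n)" "0 < t!k"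
    then have "t = (t[k := t!k - 1])[k := Suc (t[k := t!k - 1] ! k)]" "k < length t"
      using assms by (auto simp: weak_compositions_def)
    then have "sum_list t = Suc (sum_list (t[k := t!k - 1]))"
      using bump_sum by (metis length_list_update)
    with t show "t[k := t!k - 1] \<in> weak_compositions a n" by (simp add: weak_compositions_def)
  qed
qed (use assms in \<open>auto simp: weak_compositions_def\<close>)

lemma weak_composition_large_part:
  assumes t: "t \<in> weak_compositions a n" and "k < a" "t!k = 0" "(a - 1) * (l - 1) < n"
  shows "\<exists>j<a. l \<le> t!j"
proof (rule ccontr)
  assume "\<not> (\<exists>j<a. l \<le> t!j)"
  then have small: "t!j \<le> l - 1" if "j < a" for j
    using that by fastforce
  have "n = (\<Sum>j<a. t!j)"
    using t by (auto simp: weak_compositions_def sum_list_sum_nth atLeast0LessThan)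
  also have "\<dots> = t!k + (\<Sum>j\<in>{..<a} - {k}. t!j)"
    using \<open>k < a\<close> by (simp add: sum.remove)
  also have "\<dots> \<le> card ({..<a} - {k}) * (l - 1)"
    using \<open>t!k = 0\<close> sum_bounded_above[of "{..<a} - {k}" "\<lambda>j. t!j" "l - 1"] small by simp
  also have "\<dots> = (a - 1) * (l - 1)"
    using \<open>k < a\<close> by simp
  finally show False
    using assms(4) by linarith
qed

lemma monomial_bump:
  fixes y :: "nat \<Rightarrow> 'a::monoid_mult"
  assumes "k < length t" "\<And>j. j < length t \<Longrightarrow> y k * y j = y j * y k"
  shows "y k * monomial y t = monomial y (t[k := Suc (t!k)])"
  unfolding monomial_def length_list_update
proof (rule prod_list_map_mult_one_factor)
  fix j assume "j \<in> set [0..<length t]"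
  then have "y j * y k = y k * y j"
    using assms(2) by simp
  from power_commuting_commutes[OF this] show "y k * y j ^ (t!j) = y j ^ (t!j) * y k"
    by simp
qed (use assms(1) in auto)

lemma monomial_eq_0:
  fixes y :: "nat \<Rightarrow> 'a::semiring_1"
  assumes "j < length t" "y j ^ l = 0" "l \<le> t!j"
  shows "monomial y t = 0"
proof -
  have "y j ^ (t!j) = 0"
    using assms by (metis le_add_diff_inverse mult_zero_left power_add)
  then have "0 \<in> set (map (\<lambda>j. y j ^ (t!j)) [0..<length t])"
    using assms(1) by force
  then show ?thesis
    unfolding monomial_def by (rule prod_list_eq_0)
qed

lemma complete_homogeneous_mult_var:
  fixes y :: "nat \<Rightarrow> 'a::semiring_1"
  assumes comm: "\<And>i j. i < a \<Longrightarrow> j < a \<Longrightarrow> y i * y j = y j * y i"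
    and nil: "\<And>i. i < a \<Longrightarrow> y i ^ l = 0"
    and "k < a" "(a - 1) * (l - 1) \<le> n"
  shows "y k * complete_homogeneous y a n = complete_homogeneous y a (Suc n)"
proof -
  let ?bump = "\<lambda>t. t[k := Suc (t!k)]"
  let ?S = "weak_compositions a (Suc n)"
  have bij: "bij_betw ?bump (weak_compositions a n) {t \<in> ?S. 0 < t!k}"
    using \<open>k < a\<close> by (rule bij_betw_bump_weak_compositions)
  have "y k * complete_homogeneous y a n = (\<Sum>t\<in>weak_compositions a n. monomial y (?bump t))"
    unfolding complete_homogeneous_def sum_distrib_left
    using \<open>k < a\<close> comm by (intro sum.cong refl monomial_bump) (auto simp: weak_compositions_def)
  also have "\<dots> = sum (monomial y) {t \<in> ?S. 0 < t!k}"
    using sum.reindex_bij_betw[OF bij] by simp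
  also have "\<dots> = sum (monomial y) ?S"
  proof (rule sum.mono_neutral_left[OF finite_weak_compositions])
    show "\<forall>t\<in>?S - {t \<in> ?S. 0 < t!k}. monomial y t = 0"
    proof
      fix t assume t: "t \<in> ?S - {t \<in> ?S. 0 < t!k}"
      then obtain j where "j < a" "l \<le> t!j"
        using weak_composition_large_part[of t a "Suc n" k l] \<open>k < a\<close> assms(4) by auto
      with t nil show "monomial y t = 0"
        by (intro monomial_eq_0) (auto simp: weak_compositions_def)
    qed
  qed auto
  finally show ?thesis
    unfolding complete_homogeneous_def .
qed

lemma h_alpha_complete_homogeneous:
  "h_alpha l x r \<alpha> A = complete_homogeneous (\<lambda>j. of_int (eps_sign \<alpha> j) * x (A!j))
     (length A) ((length A - 1) * (l - 1) + r)"
  unfolding h_alpha_def complete_homogeneous_def monomial_def weak_compositions_def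
  by (rule sum.cong) auto

lemma eps_sign_Suc: "eps_sign \<alpha> (Suc i) = eps_sign \<alpha> i * (if \<alpha>!i then -1 else 1)"
  by (simp add: eps_sign_def)

lemma eps_sign_square: "eps_sign \<alpha> i * eps_sign \<alpha> i = 1"
  unfolding eps_sign_def prod.distrib[symmetric] by (rule prod.neutral) simp

lemma eps_sign_length:
  assumes "alpha_even \<alpha>"
  shows "eps_sign \<alpha> (length \<alpha>) = 1"
proof -
  have "eps_sign \<alpha> (length \<alpha>) = (-1) ^ card {j. j < length \<alpha> \<and> \<alpha>!j}"
    unfolding eps_sign_def prod.If_cases[OF finite_lessThan]
    by (simp add: Int_def conj_commute)
  also have "\<dots> = (-1) ^ length (filter id \<alpha>)"
    by (simp add: length_filter_conv_card)
  finally show ?thesis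
    using assms by (simp add: alpha_even_def)
qed

lemma eps_sign_cycle:
  assumes "alpha_even \<alpha>" "k < length \<alpha>"
  shows "eps_sign \<alpha> k * eps_sign \<alpha> (Suc k mod length \<alpha>) = (if \<alpha>!k then -1 else 1)"
proof (cases "Suc k < length \<alpha>")
  case True
  then show ?thesis
    using eps_sign_square[of \<alpha> k] by (simp add: eps_sign_Suc mult.assoc[symmetric])
next
  case False
  with assms have "Suc k = length \<alpha>" by simp
  then have "eps_sign \<alpha> k * (if \<alpha>!k then -1 else 1) = 1"
    using eps_sign_length[OF assms(1)] eps_sign_Suc[of \<alpha> k] by simp
  with \<open>Suc k = length \<alpha>\<close> show ?thesis
    by (auto simp: eps_sign_def split: if_splits)
qed

lemma list_cycle_nth:
  assumes "distinct A" "i < length A"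
  shows "list_cycle A (A!i) = A ! (Suc i mod length A)"
proof -
  have "(THE j. j < length A \<and> A!j = A!i) = i"
    using assms by (auto simp: nth_eq_iff_index_eq)
  then show ?thesis
    using assms by (simp add: list_cycle_def)
qed

lemma list_cycle_permutes:
  assumes "distinct A" "A \<noteq> []"
  shows "list_cycle A permutes set A"
proof (rule bij_imp_permutes)
  have maps_to: "list_cycle A ` set A \<subseteq> set A"
  proof clarify
    fix u assume "u \<in> set A"
    then obtain i where "i < length A" "u = A!i"
      by (auto simp: in_set_conv_nth)
    with assms show "list_cycle A u \<in> set A"
      by (simp add: list_cycle_nth)
  qed
  have "inj_on (list_cycle A) (set A)"
  proof
    fix u v assume "u \<in> set A" "v \<in> set A" "list_cycle A u = list_cycle A v"
    then obtain i j where "i < length A" "j < length A" "u = A!i" "v = A!j"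
      "A ! (Suc i mod length A) = A ! (Suc j mod length A)"
      using assms by (auto simp: in_set_conv_nth list_cycle_nth)
    with assms show "u = v"
      by (auto simp: nth_eq_iff_index_eq mod_Suc split: if_splits)
  qed
  with maps_to show "bij_betw (list_cycle A) (set A) (set A)"
    by (simp add: bij_betw_def endo_inj_surj)
qed (simp add: list_cycle_def)

section \<open>Commutation with the polynomial generators\<close>

locale gr_sergeev =
  fixes l d :: nat and x :: "nat \<Rightarrow> 'a::ring_1" and s :: "(nat \<Rightarrow> nat) \<Rightarrow> 'a"
    and c :: "nat \<Rightarrow> 'a"
  assumes rel: "gr_sergeev_rel l d x s c"
begin

lemma x_commute: "i \<in> {1..d} \<Longrightarrow> j \<in> {1..d} \<Longrightarrow> x i * x j = x j * x i"
  using rel unfolding gr_sergeev_rel_def by (elim conjE) blast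

lemma x_nilpotent: "i \<in> {1..d} \<Longrightarrow> x i ^ l = 0"
  using rel unfolding gr_sergeev_rel_def by (elim conjE) blast

lemma s_x: "p permutes {1..d} \<Longrightarrow> i \<in> {1..d} \<Longrightarrow> s p * x i = x (p i) * s p"
  using rel unfolding gr_sergeev_rel_def by (elim conjE) blast

lemma x_c_anticommute: "i \<in> {1..d} \<Longrightarrow> x i * c i = - (c i * x i)"
  using rel unfolding gr_sergeev_rel_def by (elim conjE) blast

lemma x_c_commute: "i \<in> {1..d} \<Longrightarrow> j \<in> {1..d} \<Longrightarrow> i \<noteq> j \<Longrightarrow> x i * c j = c j * x i"
  using rel unfolding gr_sergeev_rel_def by (elim conjE) blast

lemma x_h_alpha_commute:
  assumes "set A \<subseteq> {1..d}" "i \<in> {1..d}"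
  shows "x i * h_alpha l x r \<alpha> A = h_alpha l x r \<alpha> A * x i"
proof -
  have factor_commute: "x i * (of_int e * x (A!j)) ^ n = (of_int e * x (A!j)) ^ n * x i"
    if "j < length A" for e j n
  proof -
    have "A!j \<in> {1..d}"
      using assms(1) that nth_mem by blast
    from x_commute[OF this assms(2)]
    have "(of_int e * x (A!j)) * x i = of_int e * x i * x (A!j)"
      by (simp add: mult.assoc)
    also have "\<dots> = x i * (of_int e * x (A!j))"
      by (simp only: mult_of_int_commute[of e "x i"] mult.assoc)
    finally have "(of_int e * x (A!j)) * x i = x i * (of_int e * x (A!j))" .
    from power_commuting_commutes[OF this, of n] show ?thesis
      by simp
  qed
  show ?thesis
    unfolding h_alpha_def sum_distrib_left sum_distrib_right
    by (intro sum.cong refl prod_list_commute) (auto intro: factor_commute)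
qed

lemma x_h_alpha_cycle:
  assumes "set A \<subseteq> {1..d}" "length \<alpha> = length A" "alpha_even \<alpha>" "k < length A"
  shows "x (A!k) * h_alpha l x r \<alpha> A
           = of_int (if \<alpha>!k then -1 else 1) * (h_alpha l x r \<alpha> A * x (A ! (Suc k mod length A)))"
proof -
  define y where "y j = of_int (eps_sign \<alpha> j) * x (A!j)" for j
  define k' where "k' = Suc k mod length A"
  let ?H = "h_alpha l x r \<alpha> A" and ?\<epsilon> = "\<lambda>j. of_int (eps_sign \<alpha> j) :: 'a"
  have in_d: "A!j \<in> {1..d}" if "j < length A" for j
    using assms(1) that nth_mem by blast
  have "k' < length A"
    using assms(4) unfolding k'_def by (metis gr0I mod_less_divisor not_less_zero)
  have "y j * y j' = y j' * y j" if "j < length A" "j' < length A" for j j'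
    unfolding y_def of_int_mult_mult_of_int
    using x_commute[OF in_d[OF that(1)] in_d[OF that(2)]] by (simp add: mult.commute)
  moreover have "y j ^ l = 0" if "j < length A" for j
    unfolding y_def power_mult_commuting[OF mult_of_int_commute]
    using x_nilpotent[OF in_d[OF that]] by simp
  ultimately have "y j * ?H = complete_homogeneous y (length A) (Suc ((length A - 1) * (l - 1) + r))"
    if "j < length A" for j
    using that unfolding h_alpha_complete_homogeneous y_def[symmetric]
    by (intro complete_homogeneous_mult_var) auto
  then have "?\<epsilon> k * (?\<epsilon> k * (x (A!k) * ?H)) = ?\<epsilon> k * (?\<epsilon> k' * (x (A!k') * ?H))"
    using assms(4) \<open>k' < length A\<close> by (simp add: y_def mult.assoc)
  then have "x (A!k) * ?H = of_int (eps_sign \<alpha> k * eps_sign \<alpha> k') * (x (A!k') * ?H)"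
    by (simp flip: of_int_mult mult.assoc add: eps_sign_square)
  also have "\<dots> = of_int (if \<alpha>!k then -1 else 1) * (?H * x (A!k'))"
    using eps_sign_cycle[OF assms(3)] assms(2,4)
      x_h_alpha_commute[OF assms(1) in_d[OF \<open>k' < length A\<close>]]
    by (simp add: k'_def)
  finally show ?thesis
    unfolding k'_def .
qed

lemma x_c_alpha_commute:
  assumes "set A \<subseteq> {1..d}" "i \<in> {1..d}" "i \<notin> set A"
  shows "x i * c_alpha c \<alpha> A = c_alpha c \<alpha> A * x i"
  unfolding c_alpha_def
proof (rule prod_list_commute)
  show "x i * u = u * x i"
    if "u \<in> set (map (\<lambda>j. if \<alpha>!j then c (A!j) else 1) [0..<length A])" for u
    using that assms x_c_commute by (auto, metis in_mono nth_mem)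
qed

lemma x_c_alpha_skew_commute:
  assumes "distinct A" "set A \<subseteq> {1..d}" "k < length A"
  shows "x (A!k) * c_alpha c \<alpha> A = of_int (if \<alpha>!k then -1 else 1) * c_alpha c \<alpha> A * x (A!k)"
  unfolding c_alpha_def
proof (rule prod_list_map_skew_commute)
  have "A!k \<in> {1..d}"
    using assms(2,3) nth_mem by blast
  then show "x (A!k) * (if \<alpha>!k then c (A!k) else 1)
      = of_int (if \<alpha>!k then -1 else 1) * (if \<alpha>!k then c (A!k) else 1) * x (A!k)"
    using x_c_anticommute by simp
  show "x (A!k) * (if \<alpha>!j then c (A!j) else 1) = (if \<alpha>!j then c (A!j) else 1) * x (A!k)"
    if "j \<in> set [0..<length A]" "j \<noteq> k" for j
    using that assms x_c_commute by (simp, metis in_mono nth_eq_iff_index_eq nth_mem)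
qed (use assms(3) mult_of_int_commute in auto)

lemma s_list_cycle_x:
  assumes "distinct A" "A \<noteq> []" "set A \<subseteq> {1..d}" "i \<in> {1..d}"
  shows "s (list_cycle A) * x i = x (list_cycle A i) * s (list_cycle A)"
  using s_x[OF permutes_subset[OF list_cycle_permutes[OF assms(1,2)] assms(3)] assms(4)] .

lemma x_X_cycle_commute_off_cycle:
  assumes "distinct A" "A \<noteq> []" "set A \<subseteq> {1..d}" "i \<in> {1..d}" "i \<notin> set A"
  shows "x i * X_cycle l x s c r \<alpha> A = X_cycle l x s c r \<alpha> A * x i"
proof -
  let ?H = "h_alpha l x r \<alpha> A" and ?S = "s (list_cycle A)" and ?C = "c_alpha c \<alpha> A"
  have xS: "x i * ?S = ?S * x i"
    using s_list_cycle_x[OF assms(1-4)] assms(5) by (simp add: list_cycle_def)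
  have "x i * (?H * ?S * ?C) = (x i * ?H) * ?S * ?C"
    by (simp only: mult.assoc)
  also have "\<dots> = ?H * (x i * ?S) * ?C"
    by (simp only: x_h_alpha_commute[OF assms(3,4)] mult.assoc)
  also have "\<dots> = ?H * ?S * (x i * ?C)"
    by (simp only: xS mult.assoc)
  also have "\<dots> = ?H * ?S * ?C * x i"
    by (simp only: x_c_alpha_commute[OF assms(3-5)] mult.assoc)
  finally show ?thesis
    by (simp only: X_cycle_def)
qed

lemma x_X_cycle_commute_on_cycle:
  assumes "distinct A" "A \<noteq> []" "set A \<subseteq> {1..d}"
    and "length \<alpha> = length A" "alpha_even \<alpha>" "k < length A"
  shows "x (A!k) * X_cycle l x s c r \<alpha> A = X_cycle l x s c r \<alpha> A * x (A!k)"
proof -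
  let ?H = "h_alpha l x r \<alpha> A" and ?S = "s (list_cycle A)" and ?C = "c_alpha c \<alpha> A"
    and ?e = "of_int (if \<alpha>!k then -1 else 1) :: 'a" and ?j = "A!k"
  have "?j \<in> {1..d}"
    using assms(3,6) nth_mem by blast
  then have xS: "x (A ! (Suc k mod length A)) * ?S = ?S * x ?j"
    using s_list_cycle_x[OF assms(1-3)] list_cycle_nth[OF assms(1,6)] by simp
  have "x ?j * (?H * ?S * ?C) = (x ?j * ?H) * ?S * ?C"
    by (simp only: mult.assoc)
  also have "\<dots> = ?e * ?H * (x (A ! (Suc k mod length A)) * ?S) * ?C"
    by (simp only: x_h_alpha_cycle[OF assms(3-6)] mult.assoc)
  also have "\<dots> = ?e * (?H * ?S) * (x ?j * ?C)"
    by (simp only: xS mult.assoc)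
  also have "\<dots> = ?e * (?H * ?S) * (?e * (?C * x ?j))"
    by (simp only: x_c_alpha_skew_commute[OF assms(1,3,6)] mult.assoc)
  also have "\<dots> = ?H * ?S * (?C * x ?j)"
    by (rule central_involution_cancel[OF mult_of_int_commute]) (simp flip: of_int_mult)
  finally show ?thesis
    by (simp only: X_cycle_def mult.assoc)
qed

end

theorem mainTheorem8:
  fixes l d r :: nat and x :: "nat \<Rightarrow> 'a::ring_1" and s :: "(nat \<Rightarrow> nat) \<Rightarrow> 'a"
    and c :: "nat \<Rightarrow> 'a" and A :: "nat list" and \<alpha> :: "bool list"
  assumes "l \<ge> 1" and "d \<ge> 1"
    and "gr_sergeev_rel l d x s c"
    and "A \<noteq> []" and "distinct A" and "set A \<subseteq> {1..d}"
    and "length \<alpha> = length A" and "alpha_even \<alpha>"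
  shows "\<forall>j\<in>{1..d}. x j * X_cycle l x s c r \<alpha> A = X_cycle l x s c r \<alpha> A * x j"
proof
  fix j assume j: "j \<in> {1..d}"
  interpret gr_sergeev l d x s c
    using assms(3) by unfold_locales
  show "x j * X_cycle l x s c r \<alpha> A = X_cycle l x s c r \<alpha> A * x j"
  proof (cases "j \<in> set A")
    case True
    then obtain k where "k < length A" "j = A!k"
      by (auto simp: in_set_conv_nth)
    then show ?thesis
      using x_X_cycle_commute_on_cycle[OF assms(5,4,6-8)] by blast
  next
    case False
    then show ?thesis
      by (rule x_X_cycle_commute_off_cycle[OF assms(5,4,6) j])
  qed
qed

end
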